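(* Let $G$ be a finite simple $2$-connected graph with at least $4$ vertices. Suppose that there is at most one vertex $x$ of $G$ for which there exists a vertex $y\in V(G)\setminus(N_G(x)\cup\{x\})$ with $|N_G(x)\cup N_G(y)|\leqslant 3$. Then $G$ contains a chorded cycle.
   Context: A chorded cycle is a cycle together with an edge of the graph, not on the cycle, joining two vertices of the cycle. $N_G(x)$ is the set of neighbours of $x$ in $G$. *)

theory Defs
  imports Main
begin

definition simple_graph :: "'a set \<Rightarrow> ('a \<Rightarrow> 'a \<Rightarrow> bool) \<Rightarrow> bool" where
  "simple_graph V E \<longleftrightarrow> finite V \<and> (\<forall>x y. E x y \<longrightarrow> x \<in> V \<and> y \<in> V)
     \<and> (\<forall>x y. E x y \<longrightarrow> E y x) \<and> (\<forall>x. \<not> E x x)"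

definition nbhd :: "'a set \<Rightarrow> ('a \<Rightarrow> 'a \<Rightarrow> bool) \<Rightarrow> 'a \<Rightarrow> 'a set" where
  "nbhd V E x = {y \<in> V. E x y}"

definition is_walk :: "('a \<Rightarrow> 'a \<Rightarrow> bool) \<Rightarrow> 'a list \<Rightarrow> bool" where
  "is_walk E xs \<longleftrightarrow> xs \<noteq> [] \<and> (\<forall>i. Suc i < length xs \<longrightarrow> E (xs ! i) (xs ! Suc i))"

definition connected_on :: "('a \<Rightarrow> 'a \<Rightarrow> bool) \<Rightarrow> 'a set \<Rightarrow> bool" where
  "connected_on E S \<longleftrightarrow> S \<noteq> {} \<and>
     (\<forall>u\<in>S. \<forall>v\<in>S. \<exists>xs. is_walk E xs \<and> hd xs = u \<and> last xs = v \<and> set xs \<subseteq> S)"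

definition two_connected :: "'a set \<Rightarrow> ('a \<Rightarrow> 'a \<Rightarrow> bool) \<Rightarrow> bool" where
  "two_connected V E \<longleftrightarrow> card V > 2 \<and> connected_on E V \<and> (\<forall>v\<in>V. connected_on E (V - {v}))"

definition is_cycle :: "'a set \<Rightarrow> ('a \<Rightarrow> 'a \<Rightarrow> bool) \<Rightarrow> 'a list \<Rightarrow> bool" where
  "is_cycle V E xs \<longleftrightarrow> length xs \<ge> 3 \<and> distinct xs \<and> set xs \<subseteq> V \<and>
     (\<forall>i < length xs. E (xs ! i) (xs ! ((i + 1) mod length xs)))"

definition cycle_edges :: "'a list \<Rightarrow> 'a set set" where
  "cycle_edges xs = {{xs ! i, xs ! ((i + 1) mod length xs)} | i. i < length xs}"

definition has_chorded_cycle :: "'a set \<Rightarrow> ('a \<Rightarrow> 'a \<Rightarrow> bool) \<Rightarrow> bool" where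
  "has_chorded_cycle V E \<longleftrightarrow> (\<exists>xs u v. is_cycle V E xs \<and> u \<in> set xs \<and> v \<in> set xs \<and>
     E u v \<and> {u, v} \<notin> cycle_edges xs)"

end

theory Submission
  imports Defs
begin

(* Take a longest path p_0 ... p_n. Every neighbour of p_0 lies on it, and without chorded
  cycles p_0 has at most two neighbours: from neighbours p_a, p_b, p_c with a < b < c, the
  cycle p_0 ... p_c has the chord p_0 p_b. By 2-connectivity p_0 has exactly two neighbours,
  N(p_0) = {p_1, p_i} with i >= 2. Rotating the path at the edge p_0 p_i gives a longest path
  p_(i-1) ... p_0 p_i ... p_n, so likewise N(p_(i-1)) = {p_(i-2), p_i}. If i = 2, deleting p_2
  cuts {p_0, p_1} off from the remaining (at least one) vertices. If i >= 3, then p_0 and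
  p_(i-1) are distinct nonadjacent vertices whose neighbourhoods lie in {p_1, p_(i-2), p_i},
  so both are vertices of the kind the hypothesis allows only once. *)

definition is_path :: "'a set \<Rightarrow> ('a \<Rightarrow> 'a \<Rightarrow> bool) \<Rightarrow> 'a list \<Rightarrow> bool" where
  "is_path V E xs \<longleftrightarrow> is_walk E xs \<and> distinct xs \<and> set xs \<subseteq> V"

definition is_longest_path :: "'a set \<Rightarrow> ('a \<Rightarrow> 'a \<Rightarrow> bool) \<Rightarrow> 'a list \<Rightarrow> bool" where
  "is_longest_path V E xs \<longleftrightarrow> is_path V E xs \<and> (\<forall>ys. is_path V E ys \<longrightarrow> length ys \<le> length xs)"

lemma simple_graph_symp: "simple_graph V E \<Longrightarrow> symp E"
  by (simp add: simple_graph_def symp_def)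

lemma is_walk_iff_successively: "is_walk E xs \<longleftrightarrow> xs \<noteq> [] \<and> successively E xs"
  by (simp add: is_walk_def successively_conv_nth)

lemma successively_confined:
  assumes "successively E xs" "hd xs \<in> A" "set xs \<inter> C = {}"
    and "\<And>x w. x \<in> A \<Longrightarrow> E x w \<Longrightarrow> w \<in> A \<union> C"
  shows "set xs \<subseteq> A"
  using assms(1-3)
proof (induction xs rule: induct_list012)
  case (3 x y zs)
  then have "y \<in> A" using assms(4)[of x y] by auto
  with 3 show ?case by auto
qed auto

lemma cycle_edge_indices:
  assumes "distinct xs" "a < length xs" "b < length xs" "{xs ! a, xs ! b} \<in> cycle_edges xs"
  shows "b = Suc a mod length xs \<or> a = Suc b mod length xs"
proof -
  obtain t where "t < length xs" "{xs ! a, xs ! b} = {xs ! t, xs ! (Suc t mod length xs)}"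
    using assms(4) by (auto simp: cycle_edges_def)
  moreover from this have "Suc t mod length xs < length xs"
    by (metis gr_implies_not0 mod_less_divisor neq0_conv)
  ultimately show ?thesis
    using assms(1-3) by (auto simp: doubleton_eq_iff nth_eq_iff_index_eq)
qed

lemma has_chorded_cycleI_path:
  assumes "symp E" "is_path V E ps" "2 \<le> i" "i < j" "j < length ps"
    and "E (ps ! 0) (ps ! i)" "E (ps ! 0) (ps ! j)"
  shows "has_chorded_cycle V E"
proof -
  define xs where "xs = take (Suc j) ps"
  have len: "length xs = Suc j" and nth: "\<And>t. t \<le> j \<Longrightarrow> xs ! t = ps ! t"
    using assms(5) by (auto simp: xs_def)
  have "distinct xs" "set xs \<subseteq> V" and walk: "\<And>t. Suc t < length ps \<Longrightarrow> E (ps ! t) (ps ! Suc t)"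
    using assms(2) by (auto simp: xs_def is_path_def is_walk_def dest: in_set_takeD)
  have cycle: "is_cycle V E xs"
    unfolding is_cycle_def
  proof (intro conjI allI impI)
    fix t assume "t < length xs"
    then consider "t < j" | "t = j" using len by linarith
    then show "E (xs ! t) (xs ! ((t + 1) mod length xs))"
    proof cases
      case 1
      then show ?thesis using walk[of t] assms(5) len nth by simp
    next
      case 2
      then show ?thesis using assms(1,7) len nth by (simp add: symp_def)
    qed
  qed (use len assms(3,4) \<open>distinct xs\<close> \<open>set xs \<subseteq> V\<close> in auto)
  have "{xs ! 0, xs ! i} \<notin> cycle_edges xs"
  proof
    assume "{xs ! 0, xs ! i} \<in> cycle_edges xs"
    then have "i = Suc 0 mod Suc j \<or> 0 = Suc i mod Suc j"
      using cycle_edge_indices[OF \<open>distinct xs\<close>, of 0 i] len assms(4) by simp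
    then show False using assms(3,4) by auto
  qed
  moreover have "xs ! 0 \<in> set xs" "xs ! i \<in> set xs" using len assms(4) by auto
  ultimately show ?thesis
    unfolding has_chorded_cycle_def using cycle assms(4,6) nth by fastforce
qed

lemma is_longest_path_exists:
  assumes "finite V" "V \<noteq> {}"
  shows "\<exists>xs. is_longest_path V E xs"
proof -
  have bounded: "length ys \<le> card V" if "is_path V E ys" for ys
    using that assms(1) by (metis is_path_def card_mono distinct_card)
  obtain v where "v \<in> V" using assms(2) by blast
  then have "is_path V E [v]" by (simp add: is_path_def is_walk_def)
  then show ?thesis
    using Lattices_Big.ex_has_greatest_nat[of "is_path V E" "[v]" length "Suc (card V)"] bounded
    unfolding is_longest_path_def by fastforce
qed

lemma is_longest_path_start_neighbour:
  assumes "simple_graph V E" "is_longest_path V E ps" "E (ps ! 0) w"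
  shows "\<exists>k. 0 < k \<and> k < length ps \<and> ps ! k = w"
proof -
  have path: "is_path V E ps" and ne: "ps \<noteq> []"
    using assms(2) by (auto simp: is_longest_path_def is_path_def is_walk_def)
  have "w \<in> set ps"
  proof (rule ccontr)
    assume "w \<notin> set ps"
    moreover have "E w (hd ps)" "w \<in> V"
      using assms(1,3) ne by (auto simp: simple_graph_def hd_conv_nth)
    ultimately have "is_path V E (w # ps)"
      using path by (auto simp: is_path_def is_walk_iff_successively successively_Cons)
    then show False using assms(2) by (fastforce simp: is_longest_path_def)
  qed
  then obtain k where "k < length ps" "ps ! k = w" by (auto simp: in_set_conv_nth)
  moreover have "w \<noteq> ps ! 0" using assms(1,3) by (auto simp: simple_graph_def)
  ultimately show ?thesis by (metis gr0I)
qed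

lemma chordless_longest_path_start_nbhd:
  assumes "simple_graph V E" "\<not> has_chorded_cycle V E" "is_longest_path V E ps"
    and "E (ps ! 0) a" "E (ps ! 0) b" "a \<noteq> b"
  shows "nbhd V E (ps ! 0) = {a, b}"
proof -
  have chordless: False
    if "2 \<le> k" "2 \<le> l" "k \<noteq> l" "k < length ps" "l < length ps"
      "E (ps ! 0) (ps ! k)" "E (ps ! 0) (ps ! l)" for k l
  proof -
    have "symp E" "is_path V E ps"
      using assms(1,3) simple_graph_symp by (auto simp: is_longest_path_def)
    then show False
      using that assms(2) has_chorded_cycleI_path[of E V ps k l] has_chorded_cycleI_path[of E V ps l k]
      by (cases "k < l") auto
  qed
  have "w \<in> {a, b}" if w: "E (ps ! 0) w" for w
  proof (rule ccontr)
    assume "w \<notin> {a, b}"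
    obtain ka kb kw where ka: "0 < ka" "ka < length ps" "ps ! ka = a"
      and kb: "0 < kb" "kb < length ps" "ps ! kb = b"
      and kw: "0 < kw" "kw < length ps" "ps ! kw = w"
      using is_longest_path_start_neighbour[OF assms(1,3)] assms(4,5) w by metis
    moreover have "ka \<noteq> kb" "ka \<noteq> kw" "kb \<noteq> kw"
      using ka kb kw \<open>a \<noteq> b\<close> \<open>w \<notin> {a, b}\<close> by auto
    ultimately have "2 \<le> ka \<and> 2 \<le> kb \<or> 2 \<le> ka \<and> 2 \<le> kw \<or> 2 \<le> kb \<and> 2 \<le> kw"
      by arith
    then show False
      using chordless \<open>ka \<noteq> kb\<close> \<open>ka \<noteq> kw\<close> \<open>kb \<noteq> kw\<close> ka kb kw assms(4,5) w
      by metis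
  qed
  then show ?thesis
    using assms(1,4,5) by (auto simp: nbhd_def simple_graph_def)
qed

lemma is_longest_path_rotate:
  assumes "symp E" "is_longest_path V E ps" "0 < i" "i < length ps" "E (ps ! 0) (ps ! i)"
  shows "\<exists>qs. is_longest_path V E qs \<and> qs ! 0 = ps ! (i - 1)"
proof -
  define qs where "qs = rev (take i ps) @ drop i ps"
  have "successively E (take i ps)" "successively E (drop i ps)"
    using assms(2) successively_append_iff[of E "take i ps" "drop i ps"]
    by (auto simp: is_longest_path_def is_path_def is_walk_iff_successively)
  moreover have "successively (\<lambda>x y. E y x) (take i ps)"
    using calculation(1) by (rule successively_mono) (use assms(1) in \<open>auto dest: sympD\<close>)
  moreover have "last (rev (take i ps)) = ps ! 0" "hd (drop i ps) = ps ! i"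
    using assms(3,4) by (auto simp: last_rev hd_take hd_drop_conv_nth intro!: hd_conv_nth)
  ultimately have "successively E qs"
    using assms(5) by (simp add: qs_def successively_append_iff)
  moreover have "set qs = set ps"
    unfolding qs_def by (metis append_take_drop_id set_append set_rev)
  moreover have "distinct qs = distinct ps"
    unfolding qs_def by (metis append_take_drop_id distinct_append distinct_rev set_rev)
  moreover have "length qs = length ps" using assms(4) by (simp add: qs_def)
  ultimately have "is_longest_path V E qs"
    using assms(2) by (auto simp: is_longest_path_def is_path_def is_walk_iff_successively)
  moreover have "qs ! 0 = ps ! (i - 1)" using assms(3,4) by (simp add: qs_def nth_append rev_nth)
  ultimately show ?thesis by blast
qed

lemma two_connected_edge_leaving:
  assumes "two_connected V E" "a \<in> A" "A \<subseteq> V" "c \<notin> A" "z \<in> V - A - {c}"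
  shows "\<exists>x\<in>A. \<exists>w\<in>V - A - {c}. E x w"
proof (rule ccontr)
  assume closed: "\<not> ?thesis"
  have "connected_on E (V - {c})"
    using assms(1) by (cases "c \<in> V") (auto simp: two_connected_def)
  then obtain xs where xs: "is_walk E xs" "hd xs = a" "last xs = z" "set xs \<subseteq> V - {c}"
    using assms(2-5) unfolding connected_on_def by blast
  then have "set xs \<subseteq> A"
    using successively_confined[of E xs A "- (V - {c})"] closed assms(2)
    by (auto simp: is_walk_iff_successively)
  moreover have "z \<in> set xs" using xs(1,3) by (auto simp: is_walk_def)
  ultimately show False using assms(5) by blast
qed

lemma two_connected_two_neighbours:
  assumes "two_connected V E" "v \<in> V"
  shows "\<exists>w1 w2. E v w1 \<and> E v w2 \<and> w1 \<noteq> w2"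
proof -
  have other: "\<exists>z\<in>V. z \<noteq> v \<and> z \<noteq> c" for c
  proof (rule ccontr)
    assume "\<not> ?thesis"
    then have "card V \<le> card {v, c}" by (intro card_mono) auto
    also have "\<dots> \<le> 2" by (simp add: card_insert_if)
    finally show False using assms(1) by (simp add: two_connected_def)
  qed
  have neighbour: "\<exists>w. E v w \<and> w \<noteq> v \<and> w \<noteq> c" if "c \<noteq> v" for c
    using two_connected_edge_leaving[of V E v "{v}" c] assms other[of c] that by auto
  obtain u where "u \<noteq> v" using other by blast
  then obtain w1 where "E v w1" "w1 \<noteq> v" using neighbour by blast
  moreover obtain w2 where "E v w2" "w2 \<noteq> w1" using neighbour calculation(2) by blast
  ultimately show ?thesis by blast
qed

lemma two_connected_chordless_start_nbhd:
  assumes "simple_graph V E" "two_connected V E" "\<not> has_chorded_cycle V E"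
    and "is_longest_path V E ps"
  shows "\<exists>i. 2 \<le> i \<and> i < length ps \<and> nbhd V E (ps ! 0) = {ps ! 1, ps ! i}"
proof -
  have path: "is_path V E ps" using assms(4) by (simp add: is_longest_path_def)
  then have "ps ! 0 \<in> V" by (auto simp: is_path_def is_walk_def)
  then obtain w1 w2 where "E (ps ! 0) w1" "E (ps ! 0) w2" "w1 \<noteq> w2"
    using two_connected_two_neighbours[OF assms(2)] by blast
  then obtain k1 k2 where k: "0 < k1" "k1 < length ps" "0 < k2" "k2 < length ps" "k1 \<noteq> k2"
    and "E (ps ! 0) (ps ! k1)" "E (ps ! 0) (ps ! k2)"
    using is_longest_path_start_neighbour[OF assms(1,4)] by metis
  moreover define i where "i = max k1 k2"
  ultimately have i: "2 \<le> i" "i < length ps" "E (ps ! 0) (ps ! i)"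
    by (auto simp: max_def)
  moreover have "E (ps ! 0) (ps ! 1)" using path i by (simp add: is_path_def is_walk_def)
  moreover have "ps ! 1 \<noteq> ps ! i" using path i by (simp add: is_path_def nth_eq_iff_index_eq)
  ultimately show ?thesis
    using chordless_longest_path_start_nbhd[OF assms(1,3,4)] by blast
qed

lemma two_connected_chordless_longest_path_nbhds:
  assumes "simple_graph V E" "two_connected V E" "\<not> has_chorded_cycle V E"
    and "is_longest_path V E ps"
  obtains i where "2 \<le> i" "i < length ps" "nbhd V E (ps ! 0) = {ps ! 1, ps ! i}"
    and "nbhd V E (ps ! (i - 1)) = {ps ! (i - 2), ps ! i}"
proof -
  obtain i where i: "2 \<le> i" "i < length ps" and N0: "nbhd V E (ps ! 0) = {ps ! 1, ps ! i}"
    using two_connected_chordless_start_nbhd[OF assms] by blast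
  have "E (ps ! 0) (ps ! i)" using N0 by (auto simp: nbhd_def)
  then obtain qs where qs: "is_longest_path V E qs" "qs ! 0 = ps ! (i - 1)"
    using is_longest_path_rotate[OF simple_graph_symp[OF assms(1)] assms(4), of i] i by auto
  have walk: "\<And>k. Suc k < length ps \<Longrightarrow> E (ps ! k) (ps ! Suc k)" and "distinct ps"
    using assms(4) by (auto simp: is_longest_path_def is_path_def is_walk_def)
  moreover have "Suc (i - 2) = i - 1" "Suc (i - 1) = i" using i by auto
  ultimately have "E (ps ! (i - 2)) (ps ! (i - 1))" "E (ps ! (i - 1)) (ps ! i)" "ps ! (i - 2) \<noteq> ps ! i"
    using i walk[of "i - 2"] walk[of "i - 1"] by (auto simp: nth_eq_iff_index_eq)
  then have "nbhd V E (ps ! (i - 1)) = {ps ! (i - 2), ps ! i}"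
    using chordless_longest_path_start_nbhd[OF assms(1,3) qs(1)] qs(2) assms(1)
    by (simp add: simple_graph_def)
  with i N0 show thesis by (rule that)
qed

lemma two_connected_pair_nbhd_escapes:
  assumes "two_connected V E" "card V \<ge> 4" "a \<in> V" "b \<in> V" "c \<noteq> a" "c \<noteq> b"
  shows "\<not> nbhd V E a \<union> nbhd V E b \<subseteq> {a, b, c}"
proof -
  have "\<not> V \<subseteq> {a, b, c}"
  proof
    assume "V \<subseteq> {a, b, c}"
    then have "card V \<le> card {a, b, c}" by (intro card_mono) auto
    also have "\<dots> \<le> 3" by (simp add: card_insert_if)
    finally show False using assms(2) by simp
  qed
  then obtain z where "z \<in> V - {a, b} - {c}" by blast
  then obtain x w where "x \<in> {a, b}" "w \<in> V - {a, b} - {c}" "E x w"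
    using two_connected_edge_leaving[OF assms(1), of a "{a, b}" c z] assms(3-6) by auto
  then show ?thesis by (auto simp: nbhd_def)
qed

theorem corollary2p10:
  fixes V :: "'a set" and E :: "'a \<Rightarrow> 'a \<Rightarrow> bool"
  assumes "simple_graph V E"
    and "two_connected V E"
    and "card V \<ge> 4"
    and "\<forall>x1 x2. (x1 \<in> V \<and> (\<exists>y \<in> V - (nbhd V E x1 \<union> {x1}). card (nbhd V E x1 \<union> nbhd V E y) \<le> 3))
               \<and> (x2 \<in> V \<and> (\<exists>y \<in> V - (nbhd V E x2 \<union> {x2}). card (nbhd V E x2 \<union> nbhd V E y) \<le> 3))
               \<longrightarrow> x1 = x2"
  shows "has_chorded_cycle V E"
proof (rule ccontr)
  assume chordless: "\<not> has_chorded_cycle V E"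
  have "finite V" "V \<noteq> {}" using assms(1,3) by (auto simp: simple_graph_def)
  then obtain ps where ps: "is_longest_path V E ps" using is_longest_path_exists by blast
  then obtain i where i: "2 \<le> i" "i < length ps"
    and N0: "nbhd V E (ps ! 0) = {ps ! 1, ps ! i}"
    and N1: "nbhd V E (ps ! (i - 1)) = {ps ! (i - 2), ps ! i}"
    using two_connected_chordless_longest_path_nbhds[OF assms(1,2) chordless] by blast
  have "ps \<noteq> []" using i by auto
  have "distinct ps" "set ps \<subseteq> V" using ps by (auto simp: is_longest_path_def is_path_def)
  then have "ps ! k = ps ! l \<longleftrightarrow> k = l" "ps ! k \<in> V" if "k < length ps" "l < length ps" for k l
    using that by (auto simp: nth_eq_iff_index_eq)
  note path_facts = this i \<open>ps \<noteq> []\<close>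
  show False
  proof (cases "i = 2")
    case True
    then show False
      using two_connected_pair_nbhd_escapes[OF assms(2,3), of "ps ! 0" "ps ! 1" "ps ! 2"] N0 N1
        path_facts by auto
  next
    case False
    let ?x = "ps ! 0" and ?y = "ps ! (i - 1)"
    have "card (nbhd V E ?x \<union> nbhd V E ?y) \<le> 3"
      using N0 N1 card_length[of "[ps ! 1, ps ! i, ps ! (i - 2)]"]
        card_mono[OF finite_set, of "nbhd V E ?x \<union> nbhd V E ?y" "[ps ! 1, ps ! i, ps ! (i - 2)]"]
      by auto
    moreover have "?x \<in> V - (nbhd V E ?y \<union> {?y})" "?y \<in> V - (nbhd V E ?x \<union> {?x})"
      using N0 N1 False path_facts by auto
    ultimately have "?x = ?y"
      using assms(4)[rule_format, of ?x ?y] by (metis DiffD1 Un_commute)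
    then show False using False path_facts by auto
  qed
qed

end
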